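(* For every $n \ge 3$, a flow-evaluation scheme for $(2,1)$-Group-Cut on graphs with $n$ terminals (in which $T=V$) and with edge-weights bounded by a polynomial in $n$ requires storage of $\Omega(n^2 \log n)$ bits.
   Context: $G=(V,E,w)$ is an undirected graph with integer edge weights. For a partition $\Pi$, $\mathrm{cut}_G(\Pi)=\sum_{uv\in E:\Pi(u)\neq\Pi(v)} w(uv)$; a partition agrees with demand graph $D$ if it separates every pair in $D$; $\mathrm{mincut}_G(D)$ is the minimum of $\mathrm{cut}_G(\Pi)$ over partitions of $V$ agreeing with $D$. $(2,1)$-Group-Cut is the family of demand graphs $K_{A,B}$ (complete bipartite between disjoint $A,B\subseteq T$) with $|A|=2$, $|B|=1$. A flow-evaluation scheme is a data structure with a preprocessing operation that takes $G$, terminals $T\subseteq V$, and a family $\mathcal D$ of demand graphs on $T$ and builds a data structure, and a query operation that given $D\in\mathcal D$ outputs $\mathrm{mincut}_G(D)$ using only the data structure (no access to $G$). *)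

theory Defs
  imports Complex_Main
begin

text \<open>A weighted undirected graph on vertex set V = {0..<n} (here T = V) is
  given by a symmetric weight function w; w u v = 0 means no edge.
  Weights are nonnegative integers bounded by W.\<close>
definition wgraph :: "nat \<Rightarrow> nat \<Rightarrow> (nat \<Rightarrow> nat \<Rightarrow> nat) \<Rightarrow> bool" where
  "wgraph n W w \<longleftrightarrow> (\<forall>u v. w u v = w v u) \<and> (\<forall>u. w u u = 0)
     \<and> (\<forall>u v. (u \<ge> n \<or> v \<ge> n) \<longrightarrow> w u v = 0) \<and> (\<forall>u v. w u v \<le> W)"

text \<open>A partition of V is given by a labelling; cut weight sums each edge once.\<close>
definition cut :: "nat \<Rightarrow> (nat \<Rightarrow> nat \<Rightarrow> nat) \<Rightarrow> (nat \<Rightarrow> nat) \<Rightarrow> nat" where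
  "cut n w \<Pi> = (\<Sum>(u,v)\<in>{(u,v). u < v \<and> v < n \<and> \<Pi> u \<noteq> \<Pi> v}. w u v)"

text \<open>Demand graph = set of terminal pairs to be separated.\<close>
definition agrees :: "(nat \<Rightarrow> nat) \<Rightarrow> (nat \<times> nat) set \<Rightarrow> bool" where
  "agrees \<Pi> D \<longleftrightarrow> (\<forall>(a,b)\<in>D. \<Pi> a \<noteq> \<Pi> b)"

definition mincut :: "nat \<Rightarrow> (nat \<Rightarrow> nat \<Rightarrow> nat) \<Rightarrow> (nat \<times> nat) set \<Rightarrow> nat" where
  "mincut n w D = (LEAST c. \<exists>\<Pi>. agrees \<Pi> D \<and> c = cut n w \<Pi>)"

definition KAB :: "nat set \<Rightarrow> nat set \<Rightarrow> (nat \<times> nat) set" where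
  "KAB A B = A \<times> B"

definition group_cut_21 :: "nat set \<Rightarrow> (nat \<times> nat) set set" where
  "group_cut_21 T = {KAB A B | A B. A \<subseteq> T \<and> B \<subseteq> T \<and> A \<inter> B = {} \<and> card A = 2 \<and> card B = 1}"

text \<open>A flow-evaluation scheme: preprocessing P builds a bit string from the graph,
  query Q answers using only that bit string; it is correct on graphs with n vertices
  (T = V = {0..<n}) and weights \<le> W.\<close>
definition flow_eval_scheme ::
  "nat \<Rightarrow> nat \<Rightarrow> ((nat \<Rightarrow> nat \<Rightarrow> nat) \<Rightarrow> bool list) \<Rightarrow> (bool list \<Rightarrow> (nat \<times> nat) set \<Rightarrow> nat) \<Rightarrow> bool" where
  "flow_eval_scheme n W P Q \<longleftrightarrow>
     (\<forall>w. wgraph n W w \<longrightarrow> (\<forall>D\<in>group_cut_21 {0..<n}. Q (P w) D = mincut n w D))"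

end

theory Submission
  imports Defs "HOL-Library.FuncSet"
begin

text \<open>Split \<open>{1..n-1}\<close> into two halves and let \<open>f\<close> assign to each of the \<open>\<ge> n\<^sup>2/36\<close> cross pairs
  \<open>(a, b)\<close> a weight below \<open>2 ^ \<lfloor>log n\<rfloor> \<le> n\<close>. Put these weights on the cross edges and join every
  vertex to the hub \<open>0\<close> by an edge padding its weighted degree to \<open>3n\<^sup>2\<close>. Then the minimum cut
  separating \<open>{a, b}\<close> from \<open>0\<close> is \<open>6n\<^sup>2 - 2 f(a, b)\<close>, so the (2,1)-queries recover \<open>f\<close> and the
  stored strings of the \<open>2 ^ (\<lfloor>log n\<rfloor> \<cdot> #pairs)\<close> graphs are pairwise distinct; one of them has
  length at least \<open>\<lfloor>log n\<rfloor> \<cdot> #pairs \<ge> n\<^sup>2 log n / 72\<close>.\<close>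

lemma card_bool_lists_shorter: "card {xs :: bool list. length xs < L} < 2 ^ L"
proof (cases L)
  case (Suc m)
  have "{xs :: bool list. length xs < L} = {xs. set xs \<subseteq> UNIV \<and> length xs \<le> m}"
    using Suc by auto
  then have "card {xs :: bool list. length xs < L} = (\<Sum>i=0..<L. 2 ^ i)"
    using card_lists_length_le[of "UNIV :: bool set" m] Suc
    by (simp add: atLeastLessThanSuc_atLeastAtMost atLeast0AtMost)
  then show ?thesis by (simp add: sum_power2)
qed simp

lemma inj_on_ex_long_bool_list:
  fixes g :: "'a \<Rightarrow> bool list"
  assumes "inj_on g A" "finite A" "2 ^ L \<le> card A"
  shows "\<exists>x\<in>A. L \<le> length (g x)"
proof (rule ccontr)
  assume "\<not> ?thesis"
  then have "g ` A \<subseteq> {xs. length xs < L}" by auto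
  moreover have "finite {xs :: bool list. length xs < L}"
    by (rule finite_subset[OF _ finite_lists_length_le[of "UNIV :: bool set" L]]) auto
  ultimately have "card (g ` A) \<le> card {xs :: bool list. length xs < L}"
    by (simp add: card_mono)
  with card_bool_lists_shorter[of L] assms show False by (simp add: card_image)
qed

lemma two_power_floor_log_le: "0 < n \<Longrightarrow> 2 ^ nat \<lfloor>log 2 (real n)\<rfloor> \<le> n"
  using floor_log_nat_eq_powr_iff[of 2 n "nat \<lfloor>log 2 (real n)\<rfloor>"] by simp

lemma le_twice_floor: "1 \<le> y \<Longrightarrow> y \<le> 2 * of_int \<lfloor>y\<rfloor>"
  for y :: real
  using floor_correct[of y] le_floor_iff[of 1 y] by linarith

lemma sum_separated_le_cut:
  assumes "E \<subseteq> {(u, v). u < v \<and> v < n \<and> \<pi> u \<noteq> \<pi> v}"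
  shows "(\<Sum>(u, v)\<in>E. w u v) \<le> cut n w \<pi>"
  unfolding cut_def
  by (rule sum_mono2[OF finite_subset[of _ "{..<n} \<times> {..<n}"] assms]) auto

lemma cut_indicator_eq:
  assumes sym: "\<forall>u v. w u v = w v u" and S: "S \<subseteq> {..<n}"
  shows "cut n w (\<lambda>v. if v \<in> S then 1 else 0) = (\<Sum>u\<in>S. \<Sum>v\<in>{..<n} - S. w u v)"
proof -
  let ?\<pi> = "\<lambda>v. if v \<in> S then 1 :: nat else 0"
  let ?sort = "\<lambda>(u :: nat, v :: nat). (min u v, max u v)"
  have pairs: "{(u, v). u < v \<and> v < n \<and> ?\<pi> u \<noteq> ?\<pi> v} = ?sort ` (S \<times> ({..<n} - S))"
  proof (intro set_eqI iffI)
    fix p assume "p \<in> {(u, v). u < v \<and> v < n \<and> ?\<pi> u \<noteq> ?\<pi> v}"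
    then obtain u v where p: "p = (u, v)" "u < v" "v < n" "?\<pi> u \<noteq> ?\<pi> v" by auto
    show "p \<in> ?sort ` (S \<times> ({..<n} - S))"
    proof (cases "u \<in> S")
      case True
      then have "v \<notin> S" using p by auto
      then show ?thesis using p True by (auto intro!: image_eqI[of _ _ "(u, v)"])
    next
      case False
      then have "v \<in> S" using p by (auto split: if_splits)
      then show ?thesis using p False by (auto intro!: image_eqI[of _ _ "(v, u)"])
    qed
  next
    fix p assume "p \<in> ?sort ` (S \<times> ({..<n} - S))"
    then obtain u v where "p = (min u v, max u v)" "u \<in> S" "v < n" "v \<notin> S" by auto
    moreover from this S have "u < n" "u \<noteq> v" by auto
    ultimately show "p \<in> {(u, v). u < v \<and> v < n \<and> ?\<pi> u \<noteq> ?\<pi> v}"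
      by (auto simp: min_def max_def)
  qed
  have inj: "inj_on ?sort (S \<times> ({..<n} - S))"
    by (auto simp: inj_on_def min_def max_def split: if_splits)
  have "cut n w ?\<pi> = (\<Sum>(u, v)\<in>S \<times> ({..<n} - S). w (min u v) (max u v))"
    unfolding cut_def pairs by (subst sum.reindex[OF inj]) (simp add: comp_def case_prod_unfold)
  also have "\<dots> = (\<Sum>(u, v)\<in>S \<times> ({..<n} - S). w u v)"
    by (rule sum.cong) (auto simp: min_def max_def sym)
  finally show ?thesis by (simp add: sum.cartesian_product)
qed

lemma mincut_eqI:
  assumes "agrees \<pi> D" "\<And>\<pi>'. agrees \<pi>' D \<Longrightarrow> cut n w \<pi> \<le> cut n w \<pi>'"
  shows "mincut n w D = cut n w \<pi>"
  unfolding mincut_def by (rule Least_equality) (use assms in auto)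

lemma cut_pair_indicator_eq:
  assumes w: "wgraph n W w" and deg: "(\<Sum>z<n. w x z) = H" "(\<Sum>z<n. w y z) = H"
    and xy: "x < n" "y < n" "x \<noteq> y"
  shows "cut n w (\<lambda>v. if v \<in> {x, y} then 1 else 0) = 2 * H - 2 * w x y"
proof -
  have sym: "\<forall>u v. w u v = w v u" and loop: "\<And>u. w u u = 0"
    using w unfolding wgraph_def by auto
  have leaving: "(\<Sum>v\<in>{..<n} - {x, y}. w u v) = H - w x y" if u: "u \<in> {x, y}" for u
  proof -
    have "(\<Sum>v\<in>{..<n} - {x, y}. w u v) = (\<Sum>v<n. w u v) - (\<Sum>v\<in>{x, y}. w u v)"
      by (rule sum_diff_nat) (use xy in auto)
    also have "(\<Sum>v<n. w u v) = H" using deg u by auto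
    also have "(\<Sum>v\<in>{x, y}. w u v) = w x y" using u xy loop sym by auto
    finally show ?thesis .
  qed
  have "cut n w (\<lambda>v. if v \<in> {x, y} then 1 else 0) = (\<Sum>u\<in>{x, y}. \<Sum>v\<in>{..<n} - {x, y}. w u v)"
    by (rule cut_indicator_eq[OF sym]) (use xy in auto)
  also have "\<dots> = (\<Sum>u\<in>{x, y}. H - w x y)" by (rule sum.cong) (simp_all add: leaving)
  finally show ?thesis using xy by simp
qed

text \<open>A partition separating a third vertex from the hub \<open>0\<close> pays at least \<open>2H\<close> on hub edges
  alone, so the cheapest way to cut \<open>{x, y}\<close> off the hub is \<open>{x, y}\<close> itself.\<close>

lemma mincut_pair_vs_hub:
  assumes w: "wgraph n W w"
    and deg: "\<And>v. 0 < v \<Longrightarrow> v < n \<Longrightarrow> (\<Sum>z<n. w v z) = H"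
    and heavy: "\<And>v. 0 < v \<Longrightarrow> v < n \<Longrightarrow> 2 * H \<le> 3 * w 0 v"
    and x: "0 < x" "x < n" and y: "0 < y" "y < n" "x \<noteq> y"
  shows "mincut n w (KAB {x, y} {0}) = 2 * H - 2 * w x y"
proof -
  let ?\<pi> = "\<lambda>v. if v \<in> {x, y} then 1 :: nat else 0"
  have agrees_iff: "agrees \<pi> (KAB {x, y} {0}) \<longleftrightarrow> \<pi> x \<noteq> \<pi> 0 \<and> \<pi> y \<noteq> \<pi> 0" for \<pi> :: "nat \<Rightarrow> nat"
    unfolding agrees_def KAB_def by auto
  have cut_pair: "cut n w ?\<pi> = 2 * H - 2 * w x y"
    using x y by (intro cut_pair_indicator_eq[OF w] deg) auto
  have "mincut n w (KAB {x, y} {0}) = cut n w ?\<pi>"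
  proof (rule mincut_eqI)
    show "agrees ?\<pi> (KAB {x, y} {0})" using agrees_iff x y by auto
    fix \<pi> assume "agrees \<pi> (KAB {x, y} {0})"
    then have px: "\<pi> x \<noteq> \<pi> 0" and py: "\<pi> y \<noteq> \<pi> 0" using agrees_iff by auto
    show "cut n w ?\<pi> \<le> cut n w \<pi>"
    proof (cases "\<exists>v<n. v \<notin> {x, y} \<and> \<pi> v \<noteq> \<pi> 0")
      case True
      then obtain v where v: "v < n" "v \<notin> {x, y}" "\<pi> v \<noteq> \<pi> 0" by auto
      then have "0 < v" by (cases v) auto
      then have "2 * H \<le> w 0 x + w 0 y + w 0 v"
        using heavy[OF x] heavy[OF y(1,2)] heavy[OF _ v(1)] by linarith
      also have "\<dots> = (\<Sum>(a, b)\<in>{(0, x), (0, y), (0, v)}. w a b)" using y v by simp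
      also have "\<dots> \<le> cut n w \<pi>"
        by (rule sum_separated_le_cut) (use x y v \<open>0 < v\<close> px py in auto)
      finally show ?thesis using cut_pair by linarith
    next
      case False
      have "?\<pi> u \<noteq> ?\<pi> v \<Longrightarrow> \<pi> u \<noteq> \<pi> v" if "u < n" "v < n" for u v
        using False px py that by (cases "u \<in> {x, y}"; cases "v \<in> {x, y}") auto
      then show ?thesis unfolding cut_def[of n w ?\<pi>]
        by (intro sum_separated_le_cut) auto
    qed
  qed
  with cut_pair show ?thesis by simp
qed

definition cross_pairs :: "nat \<Rightarrow> (nat \<times> nat) set" where
  "cross_pairs n = {1..(n - 1) div 2} \<times> {(n - 1) div 2 + 1..<n}"

definition cross_weight :: "nat \<Rightarrow> (nat \<times> nat \<Rightarrow> nat) \<Rightarrow> nat \<Rightarrow> nat \<Rightarrow> nat" where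
  "cross_weight n f u v =
     (if (min u v, max u v) \<in> cross_pairs n then f (min u v, max u v) else 0)"

definition encoding_graph :: "nat \<Rightarrow> (nat \<times> nat \<Rightarrow> nat) \<Rightarrow> nat \<Rightarrow> nat \<Rightarrow> nat" where
  "encoding_graph n f u v =
     (if u = 0 \<and> 0 < v \<and> v < n then 3 * n\<^sup>2 - (\<Sum>z<n. cross_weight n f v z)
      else if v = 0 \<and> 0 < u \<and> u < n then 3 * n\<^sup>2 - (\<Sum>z<n. cross_weight n f u z)
      else cross_weight n f u v)"

lemma cross_pairs_bounds: "(a, b) \<in> cross_pairs n \<Longrightarrow> 0 < a \<and> a < b \<and> b < n"
  unfolding cross_pairs_def by auto

lemma card_cross_pairs_ge:
  assumes "3 \<le> n"
  shows "real n ^ 2 \<le> 36 * real (card (cross_pairs n))"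
proof -
  define a where "a = (n - 1) div 2"
  have card: "card (cross_pairs n) = a * (n - 1 - a)"
    unfolding cross_pairs_def a_def by (simp add: card_cartesian_product)
  have "2 * a + 2 \<ge> n" "2 * a \<le> n - 1" unfolding a_def using assms by auto
  then have "real n - 2 \<le> 2 * real a" "real n - 1 \<le> 2 * real (n - 1 - a)"
    using assms by (simp_all add: of_nat_diff)
  then have "(real n - 2) * (real n - 1) \<le> (2 * real a) * (2 * real (n - 1 - a))"
    using assms by (intro mult_mono) auto
  moreover have "real n ^ 2 \<le> 9 * ((real n - 2) * (real n - 1))"
  proof -
    have "0 \<le> (real n - 3) * (8 * real n - 3)" using assms by simp
    then show ?thesis by (simp add: algebra_simps power2_eq_square)
  qed
  ultimately show ?thesis unfolding card by simp
qed

lemma floor_log_mult_card_cross_pairs_ge: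
  assumes n: "3 \<le> n"
  shows "1/72 * real n ^ 2 * log 2 (real n) \<le> real (nat \<lfloor>log 2 (real n)\<rfloor> * card (cross_pairs n))"
proof -
  define j where "j = nat \<lfloor>log 2 (real n)\<rfloor>"
  have log_ge_1: "1 \<le> log 2 (real n)" using n by simp
  then have "real j = of_int \<lfloor>log 2 (real n)\<rfloor>" unfolding j_def by simp
  with le_twice_floor[OF log_ge_1] have "log 2 (real n) \<le> 2 * real j" by simp
  then have "real n ^ 2 * log 2 (real n) \<le> (36 * real (card (cross_pairs n))) * (2 * real j)"
    using card_cross_pairs_ge[OF n] log_ge_1 by (intro mult_mono) simp_all
  then show ?thesis unfolding j_def[symmetric] by (simp add: ac_simps)
qed

lemma cross_weight_commute: "cross_weight n f u v = cross_weight n f v u"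
  unfolding cross_weight_def by (simp add: min.commute max.commute)

lemma cross_weight_eq_0:
  assumes "u = 0 \<or> v = 0 \<or> u = v \<or> n \<le> u \<or> n \<le> v"
  shows "cross_weight n f u v = 0"
proof -
  have "(min u v, max u v) \<notin> cross_pairs n"
    using assms cross_pairs_bounds[of "min u v" "max u v" n] by (auto simp: min_def max_def)
  then show ?thesis unfolding cross_weight_def by simp
qed

lemma cross_weight_less:
  "f \<in> cross_pairs n \<rightarrow> {..<n} \<Longrightarrow> 0 < n \<Longrightarrow> cross_weight n f u v < n"
  unfolding cross_weight_def by auto

lemma cross_degree_le:
  assumes "f \<in> cross_pairs n \<rightarrow> {..<n}"
  shows "(\<Sum>z<n. cross_weight n f x z) \<le> n\<^sup>2"
proof -
  have "(\<Sum>z<n. cross_weight n f x z) \<le> (\<Sum>z<n. n)"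
    using cross_weight_less[OF assms] by (intro sum_mono) (simp add: less_imp_le)
  then show ?thesis by (simp add: power2_eq_square)
qed

lemma encoding_graph_commute: "encoding_graph n f u v = encoding_graph n f v u"
  unfolding encoding_graph_def by (auto simp: cross_weight_commute)

lemma encoding_graph_inner: "0 < u \<Longrightarrow> 0 < v \<Longrightarrow> encoding_graph n f u v = cross_weight n f u v"
  unfolding encoding_graph_def by simp

lemma encoding_graph_hub_heavy:
  assumes "f \<in> cross_pairs n \<rightarrow> {..<n}" "0 < x" "x < n"
  shows "2 * n\<^sup>2 \<le> encoding_graph n f 0 x"
  using assms cross_degree_le[OF assms(1), of x] unfolding encoding_graph_def by simp

lemma encoding_graph_degree:
  assumes f: "f \<in> cross_pairs n \<rightarrow> {..<n}" and x: "0 < x" "x < n"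
  shows "(\<Sum>v<n. encoding_graph n f x v) = 3 * n\<^sup>2"
proof -
  let ?d = "\<Sum>z<n. cross_weight n f x z"
  have "encoding_graph n f x v = cross_weight n f x v + (if v = 0 then 3 * n\<^sup>2 - ?d else 0)"
    if "v < n" for v
    using x that by (simp add: encoding_graph_def cross_weight_eq_0)
  then have "(\<Sum>v<n. encoding_graph n f x v) = ?d + (3 * n\<^sup>2 - ?d)"
    using x by (simp add: sum.distrib sum.delta)
  also have "\<dots> = 3 * n\<^sup>2" using cross_degree_le[OF f, of x] by simp
  finally show ?thesis .
qed

lemma wgraph_encoding_graph:
  assumes n: "3 \<le> n" and f: "f \<in> cross_pairs n \<rightarrow> {..<n}"
  shows "wgraph n (n ^ 3) (encoding_graph n f)"
proof -
  have "3 * n\<^sup>2 \<le> n ^ 3" "n \<le> n ^ 3" using n by (simp_all add: power_eq_if)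
  moreover have "cross_weight n f u v < n" for u v using cross_weight_less[OF f] n by simp
  ultimately have "3 * n\<^sup>2 - d \<le> n ^ 3" "cross_weight n f u v \<le> n ^ 3" for u v d
    by (simp, meson less_imp_le order.trans)
  then have "encoding_graph n f u v \<le> n ^ 3" for u v
    unfolding encoding_graph_def by simp
  moreover have "n \<le> u \<or> n \<le> v \<Longrightarrow> encoding_graph n f u v = 0" for u v
    unfolding encoding_graph_def using cross_weight_eq_0[of u v n f] by auto
  ultimately show ?thesis
    unfolding wgraph_def encoding_graph_def
    using encoding_graph_commute[unfolded encoding_graph_def] by (simp add: cross_weight_eq_0)
qed

lemma mincut_encoding_graph:
  assumes n: "3 \<le> n" and f: "f \<in> cross_pairs n \<rightarrow> {..<n}" and ab: "(a, b) \<in> cross_pairs n"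
  shows "mincut n (encoding_graph n f) (KAB {a, b} {0}) = 6 * n\<^sup>2 - 2 * f (a, b)"
proof -
  have a: "0 < a" "a < b" "b < n" using cross_pairs_bounds[OF ab] by auto
  have "mincut n (encoding_graph n f) (KAB {a, b} {0}) = 2 * (3 * n\<^sup>2) - 2 * encoding_graph n f a b"
    using a encoding_graph_hub_heavy[OF f]
    by (intro mincut_pair_vs_hub[OF wgraph_encoding_graph[OF n f]] encoding_graph_degree[OF f])
      fastforce+
  also have "encoding_graph n f a b = f (a, b)"
    using a ab by (simp add: encoding_graph_inner cross_weight_def)
  finally show ?thesis by simp
qed

lemma inj_on_encoding_graph:
  assumes n: "3 \<le> n" and scheme: "flow_eval_scheme n (n ^ 3) P Q"
  shows "inj_on (\<lambda>f. P (encoding_graph n f)) (cross_pairs n \<rightarrow>\<^sub>E {..<n})"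
proof (rule inj_onI)
  fix f g assume f: "f \<in> cross_pairs n \<rightarrow>\<^sub>E {..<n}" and g: "g \<in> cross_pairs n \<rightarrow>\<^sub>E {..<n}"
    and same_data: "P (encoding_graph n f) = P (encoding_graph n g)"
  show "f = g"
  proof (rule PiE_ext[OF f g])
    fix p assume p: "p \<in> cross_pairs n"
    obtain a b where ab: "p = (a, b)" by fastforce
    have "0 < a" "a < b" "b < n" using cross_pairs_bounds p ab by auto
    then have "KAB {a, b} {0} \<in> group_cut_21 {0..<n}"
      unfolding group_cut_21_def by (intro CollectI exI[of _ "{a, b}"] exI[of _ "{0}"]) auto
    with scheme same_data f g n
    have "mincut n (encoding_graph n f) (KAB {a, b} {0}) = mincut n (encoding_graph n g) (KAB {a, b} {0})"
      unfolding flow_eval_scheme_def by (metis PiE_iff Pi_iff wgraph_encoding_graph)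
    then have "6 * n\<^sup>2 - 2 * f p = 6 * n\<^sup>2 - 2 * g p"
      using mincut_encoding_graph[OF n _ p[unfolded ab]] f g ab by (simp add: PiE_iff Pi_iff)
    moreover have "f p < n" "g p < n" using f g p by auto
    moreover have "n \<le> 3 * n\<^sup>2" by (simp add: power2_eq_square)
    ultimately show "f p = g p" by linarith
  qed
qed

theorem theorem14:
  "\<exists>k::nat. \<exists>c::real. c > 0 \<and>
     (\<forall>n::nat. n \<ge> 3 \<longrightarrow>
        (\<forall>P Q. flow_eval_scheme n (n ^ k) P Q \<longrightarrow>
           (\<exists>w. wgraph n (n ^ k) w \<and>
                real (length (P w)) \<ge> c * real n ^ 2 * log 2 (real n))))"
proof (rule exI[of _ 3], rule exI[of _ "1/72"], intro conjI allI impI)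
  fix n :: nat and P Q
  assume n: "3 \<le> n" and scheme: "flow_eval_scheme n (n ^ 3) P Q"
  define j where "j = nat \<lfloor>log 2 (real n)\<rfloor>"
  define N where "N = card (cross_pairs n)"
  define F where "F = cross_pairs n \<rightarrow>\<^sub>E {..<(2::nat) ^ j}"
  have "F \<subseteq> cross_pairs n \<rightarrow>\<^sub>E {..<n}"
    using two_power_floor_log_le[of n] n unfolding F_def j_def by (intro PiE_mono) simp
  then have "inj_on (\<lambda>f. P (encoding_graph n f)) F"
    using inj_on_encoding_graph[OF n scheme] by (rule inj_on_subset[rotated])
  moreover have "finite F" "card F = 2 ^ (j * N)"
    unfolding F_def N_def cross_pairs_def by (simp_all add: finite_PiE card_PiE power_mult)
  ultimately obtain f where f: "f \<in> F" and long: "j * N \<le> length (P (encoding_graph n f))"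
    using inj_on_ex_long_bool_list by (metis order_refl)
  have "1/72 * real n ^ 2 * log 2 (real n) \<le> real (j * N)"
    unfolding j_def N_def by (rule floor_log_mult_card_cross_pairs_ge[OF n])
  also have "\<dots> \<le> real (length (P (encoding_graph n f)))" using long by linarith
  finally have "1/72 * real n ^ 2 * log 2 (real n) \<le> real (length (P (encoding_graph n f)))" .
  moreover have "wgraph n (n ^ 3) (encoding_graph n f)"
    using f \<open>F \<subseteq> _\<close> by (intro wgraph_encoding_graph[OF n]) (auto simp: PiE_iff)
  ultimately show "\<exists>w. wgraph n (n ^ 3) w \<and> 1/72 * real n ^ 2 * log 2 (real n) \<le> real (length (P w))"
    by blast
qed simp

end
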